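(* Let $\mathcal{G}$ be a compact group acting linearly and orthogonally on $\mathbb{R}^d$ (so $\|g\cdot x\|=\|x\|$), with normalized Haar probability measure $\lambda$. Let $(\widetilde Z_0,\widetilde Z_1)$ be a pair of $\mathbb{R}^d$-valued random vectors with finite second moments, and let $G\sim\lambda$ be independent of $(\widetilde Z_0,\widetilde Z_1)$. Define $(Z_0,Z_1)=(G\cdot\widetilde Z_0,\,G\cdot\widetilde Z_1)$, and for a fixed $t\in[0,1]$ let $Z_t=(1-t)Z_0+tZ_1$ and $\widetilde Z_t=(1-t)\widetilde Z_0+t\widetilde Z_1$. Let $\Delta:=\widetilde Z_1-\widetilde Z_0$ and $U:=Z_1-Z_0=G\cdot\Delta$. Then $$\mathrm{Var}(U\mid Z_t)=\mathbb{E}\big[\mathrm{Var}(\Delta\mid\widetilde Z_t)\,\big|\,Z_t\big]+\mathrm{Var}\big(\mathbb{E}[U\mid Z_t,G]\,\big|\,Z_t\big),$$ where the second term is nonnegative. Consequently $$\mathbb{E}\big[\mathrm{Var}(U\mid Z_t)\big]\ \ge\ \mathbb{E}\big[\mathrm{Var}(\Delta\mid\widetilde Z_t)\big].$$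
   Context: For random vectors $X,Y$, $\mathrm{Var}(X\mid Y):=\mathbb{E}\big[\|X-\mathbb{E}[X\mid Y]\|^2\mid Y\big]$ (trace of the conditional covariance). *)

theory Defs
  imports "HOL-Probability.Probability" "HOL-Algebra.Group"
begin

definition sigma_of :: "'a measure \<Rightarrow> 'b measure \<Rightarrow> ('a \<Rightarrow> 'b) \<Rightarrow> 'a measure" where
  "sigma_of M N Y = vimage_algebra (space M) Y N"

definition cond_exp_vec :: "'a measure \<Rightarrow> 'a measure \<Rightarrow> ('a \<Rightarrow> real^'d) \<Rightarrow> 'a \<Rightarrow> real^'d" where
  "cond_exp_vec M F X = (\<lambda>\<omega>. \<chi> i. real_cond_exp M F (\<lambda>\<eta>. X \<eta> $ i) \<omega>)"

text \<open>Conditional variance (trace of conditional covariance):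
  Var(X | F) = E[ norm (X - E[X|F])^2 | F ].\<close>
definition cond_var :: "'a measure \<Rightarrow> 'a measure \<Rightarrow> ('a \<Rightarrow> real^'d) \<Rightarrow> 'a \<Rightarrow> real" where
  "cond_var M F X = real_cond_exp M F (\<lambda>\<omega>. (norm (X \<omega> - cond_exp_vec M F X \<omega>))^2)"

end

theory Submission
  imports Defs
begin

text \<open>
  Conditioning additionally on \<open>G\<close> loses nothing about the data: \<open>G\<close> is independent of
  \<open>(Zt0, Zt1)\<close>, and \<open>\<sigma>(Zt, G) = \<sigma>(Ztt, G)\<close> because \<open>G\<close> acts invertibly. As the action is
  linear, isometric and \<open>\<sigma>(Zt, G)\<close>-measurable, \<open>E[U | Zt, G] = G \<cdot> E[D | Ztt]\<close> and hence
  \<open>Var(U | Zt, G) = Var(D | Ztt)\<close>. The identity is then the law of total variance for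
  \<open>\<sigma>(Zt) \<subseteq> \<sigma>(Zt, G)\<close>, and the inequality follows by taking expectations.
\<close>

lemma power2_norm_vec: "(norm (x :: real^'n))\<^sup>2 = (\<Sum>i\<in>UNIV. (x $ i)\<^sup>2)"
  by (simp add: norm_vec_def L2_set_def sum_nonneg)

lemma borel_measurable_vec_nth [measurable (raw)]:
  "f \<in> borel_measurable M \<Longrightarrow> (\<lambda>x. (f x :: real^'n) $ i) \<in> borel_measurable M"
  by (rule measurable_compose[OF _ borel_measurable_nth])

lemma borel_measurable_vec_componentwise:
  fixes f :: "'a \<Rightarrow> real^'n"
  assumes "\<And>i. (\<lambda>x. f x $ i) \<in> borel_measurable M"
  shows "f \<in> borel_measurable M"
proof -
  have "f = (\<lambda>x. \<Sum>i\<in>UNIV. (f x $ i) *\<^sub>R axis i 1)"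
    by (simp add: scalar_mult_eq_scaleR[symmetric] basis_expansion)
  also have "\<dots> \<in> borel_measurable M"
    using assms by measurable
  finally show ?thesis .
qed

lemma linear_vec_nth_expansion:
  fixes f :: "real^'n \<Rightarrow> real^'m"
  assumes "linear f"
  shows "f x $ j = (\<Sum>i\<in>UNIV. x $ i * f (axis i 1) $ j)"
proof -
  have "f x = f (\<Sum>i\<in>UNIV. (x $ i) *\<^sub>R axis i 1)"
    by (simp add: scalar_mult_eq_scaleR[symmetric] basis_expansion)
  also have "\<dots> = (\<Sum>i\<in>UNIV. (x $ i) *\<^sub>R f (axis i 1))"
    using assms by (simp add: linear_sum linear_scale)
  finally show ?thesis
    by (simp add: sum_component)
qed

text \<open>Joint measurability follows from linearity alone; no countability of \<open>L\<close> is needed.\<close>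

lemma borel_measurable_linear_family:
  fixes \<rho> :: "'g \<Rightarrow> real^'n \<Rightarrow> real^'m"
  assumes lin: "\<And>g. linear (\<rho> g)" and meas: "\<And>v. (\<lambda>g. \<rho> g v) \<in> borel_measurable L"
    and X: "X \<in> borel_measurable M" and G: "G \<in> measurable M L"
  shows "(\<lambda>x. \<rho> (G x) (X x)) \<in> borel_measurable M"
proof (rule borel_measurable_vec_componentwise)
  fix j
  have expansion: "\<rho> (G x) (X x) $ j = (\<Sum>i\<in>UNIV. X x $ i * \<rho> (G x) (axis i 1) $ j)" for x
    using lin by (rule linear_vec_nth_expansion)
  show "(\<lambda>x. \<rho> (G x) (X x) $ j) \<in> borel_measurable M"
    unfolding expansion
    by (intro borel_measurable_sum borel_measurable_times borel_measurable_vec_nth X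
        measurable_compose[OF G meas])
qed

section \<open>Square integrability\<close>

definition square_integrable :: "'a measure \<Rightarrow> ('a \<Rightarrow> 'b::real_normed_vector) \<Rightarrow> bool" where
  "square_integrable M f \<longleftrightarrow> f \<in> borel_measurable M \<and> integrable M (\<lambda>x. (norm (f x))\<^sup>2)"

lemma square_integrable_real:
  "square_integrable M (f :: 'a \<Rightarrow> real) \<longleftrightarrow> f \<in> borel_measurable M \<and> integrable M (\<lambda>x. (f x)\<^sup>2)"
  by (simp add: square_integrable_def)

lemma (in finite_measure) square_integrable_integrable:
  fixes f :: "'a \<Rightarrow> real"
  shows "square_integrable M f \<Longrightarrow> integrable M f"
  by (auto simp: square_integrable_real intro: square_integrable_imp_integrable)

lemma integrable_mult_bounded:
  fixes f g :: "'a \<Rightarrow> real"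
  assumes f: "integrable M f" and g: "g \<in> borel_measurable M" "\<And>x. x \<in> space M \<Longrightarrow> \<bar>g x\<bar> \<le> c"
  shows "integrable M (\<lambda>x. g x * f x)"
proof (rule Bochner_Integration.integrable_bound)
  show "integrable M (\<lambda>x. c * f x)"
    using f by simp
  show "(\<lambda>x. g x * f x) \<in> borel_measurable M"
    using f g(1) by auto
  show "AE x in M. norm (g x * f x) \<le> norm (c * f x)"
  proof (rule AE_I2)
    fix x assume "x \<in> space M"
    then have "\<bar>g x\<bar> \<le> \<bar>c\<bar>"
      using g(2) abs_ge_self order_trans by blast
    then show "norm (g x * f x) \<le> norm (c * f x)"
      by (simp add: abs_mult mult_right_mono)
  qed
qed

lemma square_integrable_mult_integrable:
  fixes f g :: "'a \<Rightarrow> real"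
  assumes "square_integrable M f" "square_integrable M g"
  shows "integrable M (\<lambda>x. f x * g x)"
proof (rule Bochner_Integration.integrable_bound)
  show "integrable M (\<lambda>x. (f x)\<^sup>2 + (g x)\<^sup>2)"
    using assms by (auto simp: square_integrable_real)
  show "(\<lambda>x. f x * g x) \<in> borel_measurable M"
    using assms by (auto simp: square_integrable_real)
  have "\<bar>a * b\<bar> \<le> a\<^sup>2 + b\<^sup>2" for a b :: real
  proof -
    have "2 * (\<bar>a\<bar> * \<bar>b\<bar>) \<le> a\<^sup>2 + b\<^sup>2"
      using sum_squares_bound[of "\<bar>a\<bar>" "\<bar>b\<bar>"] by (simp add: mult.assoc)
    then show ?thesis
      unfolding abs_mult using mult_nonneg_nonneg[OF abs_ge_zero abs_ge_zero, of a b] by linarith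
  qed
  then show "AE x in M. norm (f x * g x) \<le> norm ((f x)\<^sup>2 + (g x)\<^sup>2)"
    by auto
qed

lemma square_integrable_lincomb:
  fixes f g :: "'a \<Rightarrow> real"
  assumes "square_integrable M f" "square_integrable M g"
  shows "square_integrable M (\<lambda>x. a * f x + b * g x)"
proof -
  have "(\<lambda>x. (a * f x + b * g x)\<^sup>2) = (\<lambda>x. a\<^sup>2 * (f x)\<^sup>2 + (2 * a * b * (f x * g x) + b\<^sup>2 * (g x)\<^sup>2))"
    by (auto simp: power2_eq_square algebra_simps)
  moreover have "integrable M \<dots>"
    using assms square_integrable_mult_integrable[OF assms] by (auto simp: square_integrable_real)
  ultimately show ?thesis
    using assms by (auto simp: square_integrable_real)
qed

lemma square_integrable_diff:
  "square_integrable M f \<Longrightarrow> square_integrable M g \<Longrightarrow> square_integrable M (\<lambda>x. f x - g x :: real)"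
  using square_integrable_lincomb[of M f g 1 "-1"] by simp

lemma square_integrable_vec_iff:
  fixes X :: "'a \<Rightarrow> real^'n"
  shows "square_integrable M X \<longleftrightarrow> (\<forall>i. square_integrable M (\<lambda>x. X x $ i))"
proof
  assume X: "square_integrable M X"
  then have [measurable]: "X \<in> borel_measurable M"
    by (simp add: square_integrable_def)
  show "\<forall>i. square_integrable M (\<lambda>x. X x $ i)"
  proof
    fix i
    have "integrable M (\<lambda>x. (X x $ i)\<^sup>2)"
    proof (rule Bochner_Integration.integrable_bound)
      show "integrable M (\<lambda>x. (norm (X x))\<^sup>2)"
        using X by (simp add: square_integrable_def)
      show "(\<lambda>x. (X x $ i)\<^sup>2) \<in> borel_measurable M"
        by measurable
      show "AE x in M. norm ((X x $ i)\<^sup>2) \<le> norm ((norm (X x))\<^sup>2)"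
        by (intro AE_I2) (simp add: abs_le_square_iff[symmetric] component_le_norm_cart)
    qed
    then show "square_integrable M (\<lambda>x. X x $ i)"
      using X by (simp add: square_integrable_real square_integrable_def)
  qed
next
  assume "\<forall>i. square_integrable M (\<lambda>x. X x $ i)"
  then show "square_integrable M X"
    by (auto simp: square_integrable_def power2_norm_vec intro: borel_measurable_vec_componentwise)
qed

lemma square_integrable_vec_diff:
  fixes X Y :: "'a \<Rightarrow> real^'n"
  shows "square_integrable M X \<Longrightarrow> square_integrable M Y \<Longrightarrow> square_integrable M (\<lambda>x. X x - Y x)"
  by (simp add: square_integrable_vec_iff square_integrable_diff)

section \<open>Generated sub-\<open>\<sigma>\<close>-algebras\<close>

lemma (in prob_space) subalgebra_imp_sigma_finite_subalgebra:
  "subalgebra M F \<Longrightarrow> sigma_finite_subalgebra M F"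
  by (intro finite_measure_subalgebra_is_sigma_finite)
     (simp add: finite_measure_subalgebra_def finite_measure_subalgebra_axioms_def finite_measure_axioms)

lemma subalgebra_sigma_of:
  assumes "Y \<in> measurable S N" "space S = space M"
  shows "subalgebra S (sigma_of M N Y)"
proof -
  have "subalgebra S (vimage_algebra (space S) Y N)"
    unfolding subalgebra_def using assms(1)
    by (auto simp: sets_vimage_algebra2 measurable_space measurable_sets)
  then show ?thesis
    by (simp add: sigma_of_def assms(2))
qed

lemma measurable_sigma_of: "Y \<in> measurable M N \<Longrightarrow> Y \<in> measurable (sigma_of M N Y) N"
  unfolding sigma_of_def by (intro measurable_vimage_algebra1) (auto dest: measurable_space)

lemma
  assumes f: "f \<in> measurable M N" and g: "g \<in> measurable M L"
  shows subalgebra_sigma_of_Pair: "subalgebra M (sigma_of M (N \<Otimes>\<^sub>M L) (\<lambda>x. (f x, g x)))"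
    and subalgebra_sigma_of_Pair_fst:
      "subalgebra (sigma_of M (N \<Otimes>\<^sub>M L) (\<lambda>x. (f x, g x))) (sigma_of M N f)"
    and measurable_sigma_of_Pair_snd: "g \<in> measurable (sigma_of M (N \<Otimes>\<^sub>M L) (\<lambda>x. (f x, g x))) L"
proof -
  have fg: "(\<lambda>x. (f x, g x)) \<in> measurable M (N \<Otimes>\<^sub>M L)"
    using f g by measurable
  then show "subalgebra M (sigma_of M (N \<Otimes>\<^sub>M L) (\<lambda>x. (f x, g x)))"
    by (rule subalgebra_sigma_of) simp
  have "f \<in> measurable (sigma_of M (N \<Otimes>\<^sub>M L) (\<lambda>x. (f x, g x))) N"
    using measurable_compose[OF measurable_sigma_of[OF fg] measurable_fst] by simp
  then show "subalgebra (sigma_of M (N \<Otimes>\<^sub>M L) (\<lambda>x. (f x, g x))) (sigma_of M N f)"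
    by (rule subalgebra_sigma_of) (simp add: sigma_of_def)
  show "g \<in> measurable (sigma_of M (N \<Otimes>\<^sub>M L) (\<lambda>x. (f x, g x))) L"
    using measurable_compose[OF measurable_sigma_of[OF fg] measurable_snd] by simp
qed

lemma sets_sigma_of_subset:
  assumes "f \<in> space M \<rightarrow> space N" "g \<in> space M \<rightarrow> space N'" "\<phi> \<in> measurable N' N"
    and "\<And>x. x \<in> space M \<Longrightarrow> f x = \<phi> (g x)"
  shows "sets (sigma_of M N f) \<subseteq> sets (sigma_of M N' g)"
proof
  fix S assume "S \<in> sets (sigma_of M N f)"
  then obtain A where A: "A \<in> sets N" "S = f -` A \<inter> space M"
    using assms(1) by (auto simp: sigma_of_def sets_vimage_algebra2)
  then have "S = g -` (\<phi> -` A \<inter> space N') \<inter> space M"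
    using assms(2,4) by auto
  moreover have "\<phi> -` A \<inter> space N' \<in> sets N'"
    using assms(3) A(1) by (rule measurable_sets)
  ultimately show "S \<in> sets (sigma_of M N' g)"
    unfolding sigma_of_def sets_vimage_algebra2[OF assms(2)] by blast
qed

lemma sigma_of_eqI:
  assumes "f \<in> space M \<rightarrow> space N" "g \<in> space M \<rightarrow> space N'"
    and "\<phi> \<in> measurable N' N" "\<And>x. x \<in> space M \<Longrightarrow> f x = \<phi> (g x)"
    and "\<psi> \<in> measurable N N'" "\<And>x. x \<in> space M \<Longrightarrow> g x = \<psi> (f x)"
  shows "sigma_of M N f = sigma_of M N' g"
proof (rule measure_eqI)
  have "sets (sigma_of M N f) \<subseteq> sets (sigma_of M N' g)"
    using assms(1-4) by (rule sets_sigma_of_subset)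
  moreover have "sets (sigma_of M N' g) \<subseteq> sets (sigma_of M N f)"
    using assms(2,1,5,6) by (rule sets_sigma_of_subset)
  ultimately show "sets (sigma_of M N f) = sets (sigma_of M N' g)"
    by (rule antisym)
qed (simp add: sigma_of_def vimage_algebra_def emeasure_sigma)

lemma sets_sigma_of_Pair:
  assumes "f \<in> space M \<rightarrow> space N" "g \<in> space M \<rightarrow> space L"
  shows "sets (sigma_of M (N \<Otimes>\<^sub>M L) (\<lambda>x. (f x, g x)))
    = sigma_sets (space M) {f -` a \<inter> g -` b \<inter> space M | a b. a \<in> sets N \<and> b \<in> sets L}"
proof -
  have fg: "(\<lambda>x. (f x, g x)) \<in> space M \<rightarrow> space N \<times> space L"
    using assms by auto
  have "sets (sigma_of M (N \<Otimes>\<^sub>M L) (\<lambda>x. (f x, g x)))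
      = {(\<lambda>x. (f x, g x)) -` S \<inter> space M | S. S \<in> sets (N \<Otimes>\<^sub>M L)}"
    unfolding sigma_of_def using fg by (intro sets_vimage_algebra2) (simp add: space_pair_measure)
  also have "\<dots> = sigma_sets (space M)
      {(\<lambda>x. (f x, g x)) -` S \<inter> space M | S. S \<in> {a \<times> b | a b. a \<in> sets N \<and> b \<in> sets L}}"
    unfolding sets_pair_measure by (rule sigma_sets_vimage_commute[OF fg])
  also have "{(\<lambda>x. (f x, g x)) -` S \<inter> space M | S. S \<in> {a \<times> b | a b. a \<in> sets N \<and> b \<in> sets L}}
      = {f -` a \<inter> g -` b \<inter> space M | a b. a \<in> sets N \<and> b \<in> sets L}"
  proof -
    have "(\<lambda>x. (f x, g x)) -` (a \<times> b) = f -` a \<inter> g -` b" for a b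
      by auto
    then show ?thesis
      by (auto 0 4)
  qed
  finally show ?thesis .
qed

lemma Int_stable_vimage_rectangles:
  "Int_stable {f -` a \<inter> g -` b \<inter> X | a b. a \<in> sets N \<and> b \<in> sets L}"
proof (rule Int_stableI)
  fix S T assume "S \<in> {f -` a \<inter> g -` b \<inter> X | a b. a \<in> sets N \<and> b \<in> sets L}"
    and "T \<in> {f -` a \<inter> g -` b \<inter> X | a b. a \<in> sets N \<and> b \<in> sets L}"
  then obtain a b a' b' where "S = f -` a \<inter> g -` b \<inter> X" "T = f -` a' \<inter> g -` b' \<inter> X"
    and "a \<in> sets N" "b \<in> sets L" "a' \<in> sets N" "b' \<in> sets L"
    by blast
  then have "S \<inter> T = f -` (a \<inter> a') \<inter> g -` (b \<inter> b') \<inter> X" "a \<inter> a' \<in> sets N" "b \<inter> b' \<in> sets L"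
    by auto
  then show "S \<inter> T \<in> {f -` a \<inter> g -` b \<inter> X | a b. a \<in> sets N \<and> b \<in> sets L}"
    by blast
qed

section \<open>Conditional expectation\<close>

lemma borel_measurable_cond_exp_vec [measurable]:
  "cond_exp_vec M F X \<in> borel_measurable F" "cond_exp_vec M F X \<in> borel_measurable M"
  by (auto simp: cond_exp_vec_def intro!: borel_measurable_vec_componentwise)

lemma (in prob_space) square_integrable_real_cond_exp:
  assumes "subalgebra M F" "square_integrable M f"
  shows "square_integrable M (real_cond_exp M F f)"
proof -
  interpret F: sigma_finite_subalgebra M F
    using assms(1) by (rule subalgebra_imp_sigma_finite_subalgebra)
  have "integrable M (\<lambda>x. (real_cond_exp M F f x)\<^sup>2)"
    using assms(2) square_integrable_integrable[OF assms(2)]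
    by (intro F.integrable_convex_cond_exp[where I=UNIV]) (auto simp: square_integrable_real convex_power2)
  then show ?thesis
    by (simp add: square_integrable_real)
qed

lemma (in prob_space) square_integrable_cond_residual:
  "subalgebra M F \<Longrightarrow> square_integrable M f \<Longrightarrow> square_integrable M (\<lambda>x. f x - real_cond_exp M F f x)"
  by (intro square_integrable_diff square_integrable_real_cond_exp)

lemma (in prob_space) square_integrable_cond_exp_vec:
  "subalgebra M F \<Longrightarrow> square_integrable M X \<Longrightarrow> square_integrable M (cond_exp_vec M F X)"
  using square_integrable_real_cond_exp by (simp add: square_integrable_vec_iff cond_exp_vec_def)

lemma (in sigma_finite_subalgebra) real_cond_exp_mult_residual:
  assumes [measurable]: "g \<in> borel_measurable F"
    and f: "integrable M f" and gf: "integrable M (\<lambda>x. g x * (f x - real_cond_exp M F f x))"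
  shows "AE x in M. real_cond_exp M F (\<lambda>x. g x * (f x - real_cond_exp M F f x)) x = 0"
proof -
  have [measurable]: "f \<in> borel_measurable M"
    using f by auto
  have "AE x in M. real_cond_exp M F (\<lambda>x. g x * (f x - real_cond_exp M F f x)) x
      = g x * real_cond_exp M F (\<lambda>x. f x - real_cond_exp M F f x) x"
    using gf by (intro real_cond_exp_mult) auto
  moreover have "AE x in M. real_cond_exp M F (\<lambda>x. f x - real_cond_exp M F f x) x
      = real_cond_exp M F f x - real_cond_exp M F (real_cond_exp M F f) x"
    using f by (intro real_cond_exp_diff real_cond_exp_int(1))
  moreover have "AE x in M. real_cond_exp M F (real_cond_exp M F f) x = real_cond_exp M F f x"
    using f by (intro real_cond_exp_F_meas real_cond_exp_int(1)) auto
  ultimately show ?thesis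
    by eventually_elim simp
qed

lemma (in prob_space) real_cond_exp_nested_zero:
  assumes subH: "subalgebra M H" and subF: "subalgebra H F" and h: "integrable M h"
    and zero: "AE x in M. real_cond_exp M H h x = 0"
  shows "AE x in M. real_cond_exp M F h x = 0"
proof -
  interpret F: sigma_finite_subalgebra M F
    using subH subF by (intro subalgebra_imp_sigma_finite_subalgebra) (auto simp: subalgebra_def)
  have "AE x in M. real_cond_exp M F (real_cond_exp M H h) x = real_cond_exp M F (\<lambda>x. 0) x"
    using zero by (intro F.real_cond_exp_cong) auto
  moreover have "AE x in M. real_cond_exp M F (\<lambda>x. 0::real) x = 0"
    by (intro F.real_cond_exp_F_meas) auto
  ultimately show ?thesis
    using F.real_cond_exp_nested_subalg[OF subH subF h] by eventually_elim simp
qed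

lemma integrable_imp_set_integrable:
  fixes f :: "'a \<Rightarrow> 'b::{banach, second_countable_topology}"
  shows "A \<in> sets M \<Longrightarrow> integrable M f \<Longrightarrow> set_integrable M A f"
  unfolding set_integrable_def by (rule integrable_mult_indicator)

lemma set_integral_zero_on_sigma_sets:
  fixes f :: "'a \<Rightarrow> 'b::{banach, second_countable_topology}"
  assumes E: "Int_stable E" "E \<subseteq> sets M" "space M \<in> E" and f: "integrable M f"
    and zero: "\<And>S. S \<in> E \<Longrightarrow> (\<integral>x\<in>S. f x \<partial>M) = 0"
    and S: "S \<in> sigma_sets (space M) E"
  shows "(\<integral>x\<in>S. f x \<partial>M) = 0"
proof -
  have sets: "sigma_sets (space M) E \<subseteq> sets M"
    using E(2) by (rule sets.sigma_sets_subset)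
  note int = integrable_imp_set_integrable[OF _ f]
  have "E \<subseteq> Pow (space M)"
    using E(2) sets.sets_into_space by blast
  from E(1) this S show ?thesis
  proof (induction rule: sigma_sets_induct_disjoint)
    case (basic S)
    then show ?case by (rule zero)
  next
    case empty
    then show ?case by (simp add: set_lebesgue_integral_def)
  next
    case (compl S)
    have "S \<in> sets M"
      using compl.hyps sets by blast
    then have "(\<integral>x\<in>space M. f x \<partial>M) = (\<integral>x\<in>(space M - S) \<union> S. f x \<partial>M)"
      by (simp add: Un_absorb2 sets.sets_into_space)
    also have "\<dots> = (\<integral>x\<in>space M - S. f x \<partial>M) + (\<integral>x\<in>S. f x \<partial>M)"
      using \<open>S \<in> sets M\<close> by (intro set_integral_Un int) auto
    finally show ?case
      using compl.IH zero[OF E(3)] by simp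
  next
    case (union S)
    have S: "range S \<subseteq> sets M"
      using union.hyps(2) sets by blast
    then have "(\<integral>x\<in>(\<Union>i. S i). f x \<partial>M) = (\<Sum>i. (\<integral>x\<in>S i. f x \<partial>M))"
      using union.hyps(1) sets.countable_UN[OF S]
      by (intro lebesgue_integral_countable_add int) (auto simp: disjoint_family_on_def)
    then show ?case
      using union.IH by simp
  qed
qed

lemma (in sigma_finite_subalgebra) real_cond_exp_charact_generator:
  assumes E: "Int_stable E" "E \<subseteq> sets M" "space M \<in> E" and sets_F: "sets F = sigma_sets (space M) E"
    and f: "integrable M f" and g: "integrable M g" "g \<in> borel_measurable F"
    and eq: "\<And>S. S \<in> E \<Longrightarrow> (\<integral>x\<in>S. f x \<partial>M) = (\<integral>x\<in>S. g x \<partial>M)"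
  shows "AE x in M. real_cond_exp M F f x = g x"
proof (rule real_cond_exp_charact)
  have diff: "(\<integral>x\<in>S. f x - g x \<partial>M) = (\<integral>x\<in>S. f x \<partial>M) - (\<integral>x\<in>S. g x \<partial>M)" if "S \<in> sets M" for S
    using that f g(1) by (intro set_integral_diff(2) integrable_imp_set_integrable)
  have zero: "(\<integral>x\<in>S. f x - g x \<partial>M) = 0" if "S \<in> E" for S
  proof -
    have "S \<in> sets M"
      using that E(2) by blast
    then show ?thesis
      using diff eq[OF that] by simp
  qed
  fix S assume "S \<in> sets F"
  then have "S \<in> sets M"
    using subalg by (auto simp: subalgebra_def)
  have "S \<in> sigma_sets (space M) E"
    using \<open>S \<in> sets F\<close> unfolding sets_F .
  then have "(\<integral>x\<in>S. f x - g x \<partial>M) = 0"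
    using set_integral_zero_on_sigma_sets[OF E(1-3) Bochner_Integration.integrable_diff[OF f g(1)] zero]
    by blast
  then show "(\<integral>x\<in>S. f x \<partial>M) = (\<integral>x\<in>S. g x \<partial>M)"
    using diff[OF \<open>S \<in> sets M\<close>] by simp
qed (use f g in auto)

section \<open>Law of total variance\<close>

definition real_cond_var :: "'a measure \<Rightarrow> 'a measure \<Rightarrow> ('a \<Rightarrow> real) \<Rightarrow> 'a \<Rightarrow> real" where
  "real_cond_var M F f = real_cond_exp M F (\<lambda>x. (f x - real_cond_exp M F f x)\<^sup>2)"

lemma (in prob_space) real_cond_var_total:
  assumes subH: "subalgebra M H" and subF: "subalgebra H F" and f: "square_integrable M f"
  shows "AE x in M. real_cond_var M F f x
    = real_cond_exp M F (real_cond_var M H f) x + real_cond_var M F (real_cond_exp M H f) x"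
proof -
  have sub: "subalgebra M F"
    using subH subF by (auto simp: subalgebra_def)
  interpret F: sigma_finite_subalgebra M F
    using sub by (rule subalgebra_imp_sigma_finite_subalgebra)
  interpret H: sigma_finite_subalgebra M H
    using subH by (rule subalgebra_imp_sigma_finite_subalgebra)
  define w where "w = real_cond_exp M H f"
  define c where "c = real_cond_exp M F f"
  define b where "b = (\<lambda>x. w x - c x)"
  have fw: "square_integrable M (\<lambda>x. f x - w x)"
    unfolding w_def using subH f by (rule square_integrable_cond_residual)
  have w: "square_integrable M w" and b: "square_integrable M b"
    unfolding b_def w_def c_def using subH sub f
    by (auto intro: square_integrable_diff square_integrable_real_cond_exp)
  have "c \<in> borel_measurable H"
    unfolding c_def using subF by (rule measurable_from_subalg) simp
  then have [measurable]: "b \<in> borel_measurable H"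
    unfolding b_def w_def by measurable
  have ints: "integrable M (\<lambda>x. (f x - w x)\<^sup>2)" "integrable M (\<lambda>x. (b x)\<^sup>2)"
      "integrable M (\<lambda>x. 2 * b x * (f x - w x))"
    using fw b square_integrable_mult_integrable[OF square_integrable_lincomb[OF b b, of 1 1] fw]
    by (auto simp: square_integrable_real)
  have expand: "(\<lambda>x. (f x - c x)\<^sup>2) = (\<lambda>x. (f x - w x)\<^sup>2 + (2 * b x * (f x - w x) + (b x)\<^sup>2))"
    by (auto simp: b_def power2_eq_square algebra_simps)
  have "AE x in M. real_cond_exp M F (\<lambda>x. (f x - c x)\<^sup>2) x
      = real_cond_exp M F (\<lambda>x. (f x - w x)\<^sup>2) x
        + (real_cond_exp M F (\<lambda>x. 2 * b x * (f x - w x)) x + real_cond_exp M F (\<lambda>x. (b x)\<^sup>2) x)"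
    unfolding expand using F.real_cond_exp_add[OF ints(1) Bochner_Integration.integrable_add[OF ints(3,2)]]
      F.real_cond_exp_add[OF ints(3,2)] by eventually_elim simp
  moreover have "AE x in M. real_cond_exp M F (\<lambda>x. (f x - w x)\<^sup>2) x
      = real_cond_exp M F (real_cond_var M H f) x"
    unfolding real_cond_var_def w_def using F.real_cond_exp_nested_subalg[OF subH subF ints(1)]
    by eventually_elim (simp add: w_def)
  moreover have "AE x in M. real_cond_exp M F (\<lambda>x. 2 * b x * (f x - w x)) x = 0"
    using subH subF ints(3) unfolding w_def
    by (rule real_cond_exp_nested_zero, intro H.real_cond_exp_mult_residual)
       (use ints(3) f square_integrable_integrable in \<open>auto simp: w_def\<close>)
  moreover have "AE x in M. real_cond_exp M F (\<lambda>x. (b x)\<^sup>2) x = real_cond_var M F w x"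
  proof -
    have "AE x in M. real_cond_exp M F w x = c x"
      unfolding c_def w_def using subH subF f square_integrable_integrable
      by (intro F.real_cond_exp_nested_subalg) auto
    then show ?thesis
      unfolding real_cond_var_def using w b
      by (intro F.real_cond_exp_cong) (auto simp: b_def square_integrable_real elim!: eventually_mono)
  qed
  ultimately show ?thesis
    unfolding real_cond_var_def c_def w_def by eventually_elim simp
qed

lemma (in prob_space) cond_var_eq_sum_real_cond_var:
  assumes F: "subalgebra M F" and X: "square_integrable M X"
  shows "AE x in M. cond_var M F X x = (\<Sum>i\<in>UNIV. real_cond_var M F (\<lambda>x. X x $ i) x)"
proof -
  interpret F: sigma_finite_subalgebra M F
    using F by (rule subalgebra_imp_sigma_finite_subalgebra)
  have "square_integrable M (\<lambda>x. X x $ i - real_cond_exp M F (\<lambda>y. X y $ i) x)" for i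
    using X by (intro square_integrable_cond_residual F) (simp add: square_integrable_vec_iff)
  then show ?thesis
    unfolding cond_var_def real_cond_var_def
    by (simp add: power2_norm_vec cond_exp_vec_def F.real_cond_exp_sum square_integrable_real)
qed

lemma (in prob_space) cond_var_total:
  assumes subH: "subalgebra M H" and subF: "subalgebra H F" and X: "square_integrable M X"
  shows "AE x in M. cond_var M F X x
    = real_cond_exp M F (cond_var M H X) x + cond_var M F (cond_exp_vec M H X) x"
proof -
  have sub: "subalgebra M F"
    using subH subF by (auto simp: subalgebra_def)
  interpret F: sigma_finite_subalgebra M F
    using sub by (rule subalgebra_imp_sigma_finite_subalgebra)
  interpret H: sigma_finite_subalgebra M H
    using subH by (rule subalgebra_imp_sigma_finite_subalgebra)
  have W: "square_integrable M (cond_exp_vec M H X)"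
    using subH X by (rule square_integrable_cond_exp_vec)
  have components: "(\<lambda>x. cond_exp_vec M H X x $ i) = real_cond_exp M H (\<lambda>x. X x $ i)" for i
    by (simp add: cond_exp_vec_def)
  have "AE x in M. real_cond_exp M F (cond_var M H X) x
      = real_cond_exp M F (\<lambda>x. \<Sum>i\<in>UNIV. real_cond_var M H (\<lambda>x. X x $ i) x) x"
    using cond_var_eq_sum_real_cond_var[OF subH X]
    by (intro F.real_cond_exp_cong) (auto simp: cond_var_def real_cond_var_def)
  moreover have "AE x in M. real_cond_exp M F (\<lambda>x. \<Sum>i\<in>UNIV. real_cond_var M H (\<lambda>x. X x $ i) x) x
      = (\<Sum>i\<in>UNIV. real_cond_exp M F (real_cond_var M H (\<lambda>x. X x $ i)) x)"
    unfolding real_cond_var_def using square_integrable_cond_residual[OF subH] X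
    by (intro F.real_cond_exp_sum H.real_cond_exp_int(1)) (auto simp: square_integrable_vec_iff square_integrable_real)
  moreover have "AE x in M. \<forall>i\<in>UNIV. real_cond_var M F (\<lambda>x. X x $ i) x
      = real_cond_exp M F (real_cond_var M H (\<lambda>x. X x $ i)) x
        + real_cond_var M F (real_cond_exp M H (\<lambda>x. X x $ i)) x"
    using X by (intro AE_finite_allI real_cond_var_total[OF subH subF]) (auto simp: square_integrable_vec_iff)
  ultimately show ?thesis
    using cond_var_eq_sum_real_cond_var[OF sub X] cond_var_eq_sum_real_cond_var[OF sub W]
    unfolding components by eventually_elim (simp add: sum.distrib)
qed

lemma (in prob_space) cond_var_nonneg:
  assumes "subalgebra M F" "X \<in> borel_measurable M"
  shows "AE x in M. 0 \<le> cond_var M F X x"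
proof -
  interpret F: sigma_finite_subalgebra M F
    using assms(1) by (rule subalgebra_imp_sigma_finite_subalgebra)
  show ?thesis
    unfolding cond_var_def using assms(2) by (intro F.real_cond_exp_pos) auto
qed

lemma (in prob_space) integrable_cond_var:
  assumes "subalgebra M F" "square_integrable M X"
  shows "integrable M (cond_var M F X)"
proof -
  interpret F: sigma_finite_subalgebra M F
    using assms(1) by (rule subalgebra_imp_sigma_finite_subalgebra)
  have "square_integrable M (\<lambda>x. X x - cond_exp_vec M F X x)"
    using assms by (intro square_integrable_vec_diff square_integrable_cond_exp_vec)
  then show ?thesis
    unfolding cond_var_def square_integrable_def by (intro F.real_cond_exp_int(1)) simp
qed

lemma (in prob_space) expectation_le_cond_exp_add_nonneg:
  assumes F: "subalgebra M F" and f: "integrable M f" and g: "integrable M g" "AE x in M. 0 \<le> g x"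
    and h: "h \<in> borel_measurable M" "AE x in M. h x = real_cond_exp M F f x + g x"
  shows "expectation f \<le> expectation h"
proof -
  interpret F: sigma_finite_subalgebra M F
    using F by (rule subalgebra_imp_sigma_finite_subalgebra)
  have "expectation h = expectation (\<lambda>x. real_cond_exp M F f x + g x)"
    using h(2) by (rule integral_cong_AE[rotated 2]) (use f g h(1) in auto)
  also have "\<dots> = expectation f + expectation g"
    using f g by (simp add: F.real_cond_exp_int)
  finally show ?thesis
    using integral_nonneg_AE[OF g(2)] by simp
qed

section \<open>Conditioning on independent information\<close>

lemma (in prob_space) indep_set_commute: "indep_set A B \<longleftrightarrow> indep_set B A"
  unfolding indep_sets2_eq by (metis Int_commute mult.commute)

lemma (in prob_space) integral_mult_indep_subalgebras:
  fixes f g :: "'a \<Rightarrow> real"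
  assumes A: "subalgebra M A" and B: "subalgebra M B" and indep: "indep_set (sets A) (sets B)"
    and f: "f \<in> borel_measurable A" "integrable M f" and g: "g \<in> borel_measurable B" "integrable M g"
  shows "(\<integral>x. f x * g x \<partial>M) = (\<integral>x. f x \<partial>M) * (\<integral>x. g x \<partial>M)"
proof -
  have id: "id \<in> measurable M C" and sets: "sigma_sets (space M) {id -` S \<inter> space M | S. S \<in> sets C} = sets C"
    if "subalgebra M C" for C
  proof -
    have "{id -` S \<inter> space M | S. S \<in> sets C} = sets C"
      using that sets.sets_into_space[of _ C] by (auto simp: subalgebra_def)
    then show "sigma_sets (space M) {id -` S \<inter> space M | S. S \<in> sets C} = sets C"
      using that sets.sigma_sets_eq[of C] by (simp add: subalgebra_def)
    show "id \<in> measurable M C"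
      using that by (intro measurableI) (auto simp: subalgebra_def dest: sets.sets_into_space)
  qed
  have "indep_var A id B id"
    unfolding indep_var_eq sets[OF A] sets[OF B] using id[OF A] id[OF B] indep by simp
  then have "indep_var borel (f \<circ> id) borel (g \<circ> id)"
    using f(1) g(1) by (rule indep_var_compose)
  then show ?thesis
    using f(2) g(2) by (intro indep_var_lebesgue_integral) simp_all
qed

lemma (in prob_space) set_integral_Int_indep:
  fixes f :: "'a \<Rightarrow> real"
  assumes A: "subalgebra M A" and B: "subalgebra M B" and indep: "indep_set (sets A) (sets B)"
    and f: "f \<in> borel_measurable A" "integrable M f" and S: "S \<in> sets A" and T: "T \<in> sets B"
  shows "(\<integral>x\<in>S \<inter> T. f x \<partial>M) = (\<integral>x\<in>S. f x \<partial>M) * prob T"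
proof -
  have "S \<in> sets M" "T \<in> sets M"
    using A B S T by (auto simp: subalgebra_def)
  have "(\<integral>x\<in>S \<inter> T. f x \<partial>M) = (\<integral>x. (indicator S x * f x) * indicator T x \<partial>M)"
    by (simp add: set_lebesgue_integral_def indicator_inter_arith ac_simps)
  also have "\<dots> = (\<integral>x. indicator S x * f x \<partial>M) * (\<integral>x. indicator T x \<partial>M)"
    using A B indep f S T integrable_real_mult_indicator[OF \<open>S \<in> sets M\<close> f(2)] \<open>T \<in> sets M\<close>
    by (intro integral_mult_indep_subalgebras) (auto simp: mult.commute less_top[symmetric])
  also have "\<dots> = (\<integral>x\<in>S. f x \<partial>M) * prob T"
    using \<open>T \<in> sets M\<close> by (simp add: set_lebesgue_integral_def)
  finally show ?thesis .
qed

text \<open>Both sides have the same integrals over the \<open>\<inter>\<close>-stable generator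
  \<open>Z\<^sup>-\<^sup>1 a \<inter> G\<^sup>-\<^sup>1 b\<close> of \<open>\<sigma>(Z, G)\<close>, because \<open>G\<^sup>-\<^sup>1 b\<close> is independent of \<open>X\<close> and of \<open>E[X | Z]\<close>.\<close>

lemma (in prob_space) real_cond_exp_Pair_indep:
  fixes X :: "'a \<Rightarrow> real"
  assumes A: "subalgebra M A" and G: "G \<in> measurable M L"
    and indep: "indep_set (sets A) (sets (sigma_of M L G))"
    and Z: "Z \<in> measurable A N" and X: "X \<in> borel_measurable A" "integrable M X"
  shows "AE \<omega> in M. real_cond_exp M (sigma_of M (N \<Otimes>\<^sub>M L) (\<lambda>\<omega>. (Z \<omega>, G \<omega>))) X \<omega>
    = real_cond_exp M (sigma_of M N Z) X \<omega>"
proof -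
  define K where "K = sigma_of M N Z"
  define H where "H = sigma_of M (N \<Otimes>\<^sub>M L) (\<lambda>\<omega>. (Z \<omega>, G \<omega>))"
  define E where "E = real_cond_exp M K X"
  have ZM: "Z \<in> measurable M N"
    using A Z by (rule measurable_from_subalg)
  have subH: "subalgebra M H" and subHK: "subalgebra H K"
    unfolding H_def K_def using ZM G by (rule subalgebra_sigma_of_Pair subalgebra_sigma_of_Pair_fst)+
  have subAK: "subalgebra A K"
    unfolding K_def using Z by (rule subalgebra_sigma_of) (use A in \<open>simp add: subalgebra_def\<close>)
  have subG: "subalgebra M (sigma_of M L G)"
    using G by (rule subalgebra_sigma_of) simp
  interpret K: sigma_finite_subalgebra M K
    using subH subHK by (intro subalgebra_imp_sigma_finite_subalgebra) (auto simp: subalgebra_def)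
  interpret H: sigma_finite_subalgebra M H
    using subH by (rule subalgebra_imp_sigma_finite_subalgebra)
  have E: "integrable M E" "E \<in> borel_measurable A" "E \<in> borel_measurable H"
    unfolding E_def using X(2) subAK subHK by (auto intro: measurable_from_subalg)
  have "AE \<omega> in M. real_cond_exp M H X \<omega> = E \<omega>"
  proof (rule H.real_cond_exp_charact_generator[OF Int_stable_vimage_rectangles])
    show "{Z -` a \<inter> G -` b \<inter> space M | a b. a \<in> sets N \<and> b \<in> sets L} \<subseteq> sets M"
      using ZM G by auto
    have "space M = Z -` space N \<inter> G -` space L \<inter> space M"
      using ZM G by (auto dest: measurable_space)
    then show "space M \<in> {Z -` a \<inter> G -` b \<inter> space M | a b. a \<in> sets N \<and> b \<in> sets L}"
      by blast
    show "sets H = sigma_sets (space M) {Z -` a \<inter> G -` b \<inter> space M | a b. a \<in> sets N \<and> b \<in> sets L}"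
      unfolding H_def using ZM G by (intro sets_sigma_of_Pair) (auto dest: measurable_space)
  next
    fix S assume "S \<in> {Z -` a \<inter> G -` b \<inter> space M | a b. a \<in> sets N \<and> b \<in> sets L}"
    then obtain a b where S: "S = (Z -` a \<inter> space M) \<inter> (G -` b \<inter> space M)" "a \<in> sets N" "b \<in> sets L"
      by blast
    have a: "Z -` a \<inter> space M \<in> sets K"
      unfolding K_def sigma_of_def using S(2) by (rule in_vimage_algebra)
    then have aA: "Z -` a \<inter> space M \<in> sets A"
      using subAK by (auto simp: subalgebra_def)
    have b: "G -` b \<inter> space M \<in> sets (sigma_of M L G)"
      unfolding sigma_of_def using S(3) by (rule in_vimage_algebra)
    have "(\<integral>x\<in>Z -` a \<inter> space M. X x \<partial>M) = (\<integral>x\<in>Z -` a \<inter> space M. E x \<partial>M)"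
      unfolding E_def using X(2) a by (rule K.real_cond_exp_intA)
    then show "(\<integral>x\<in>S. X x \<partial>M) = (\<integral>x\<in>S. E x \<partial>M)"
      unfolding S(1) using set_integral_Int_indep[OF A subG indep X aA b]
        set_integral_Int_indep[OF A subG indep E(2,1) aA b] by simp
  qed (use X(2) E in auto)
  then show ?thesis
    by (simp add: H_def E_def K_def)
qed

lemma (in prob_space) real_cond_exp_Pair_indep_mult:
  fixes Y :: "'a \<Rightarrow> real" and a :: "'g \<Rightarrow> real"
  assumes A: "subalgebra M A" and G: "G \<in> measurable M L"
    and indep: "indep_set (sets A) (sets (sigma_of M L G))"
    and Z: "Z \<in> measurable A N" and Y: "Y \<in> borel_measurable A" "integrable M Y"
    and a: "a \<in> borel_measurable L" "\<And>g. \<bar>a g\<bar> \<le> c"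
  shows "AE \<omega> in M. real_cond_exp M (sigma_of M (N \<Otimes>\<^sub>M L) (\<lambda>\<omega>. (Z \<omega>, G \<omega>))) (\<lambda>\<omega>. a (G \<omega>) * Y \<omega>) \<omega>
    = a (G \<omega>) * real_cond_exp M (sigma_of M N Z) Y \<omega>"
proof -
  define H where "H = sigma_of M (N \<Otimes>\<^sub>M L) (\<lambda>\<omega>. (Z \<omega>, G \<omega>))"
  have ZM: "Z \<in> measurable M N"
    using A Z by (rule measurable_from_subalg)
  interpret H: sigma_finite_subalgebra M H
    unfolding H_def using ZM G by (intro subalgebra_imp_sigma_finite_subalgebra subalgebra_sigma_of_Pair)
  have aH: "(\<lambda>\<omega>. a (G \<omega>)) \<in> borel_measurable H"
    unfolding H_def using measurable_sigma_of_Pair_snd[OF ZM G] a(1) by (rule measurable_compose)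
  have YM: "Y \<in> borel_measurable M"
    using A Y(1) by (rule measurable_from_subalg)
  have "integrable M (\<lambda>\<omega>. a (G \<omega>) * Y \<omega>)"
    using Y(2) measurable_from_subalg[OF H.subalg aH] a(2) by (rule integrable_mult_bounded)
  then have "AE \<omega> in M. real_cond_exp M H (\<lambda>\<omega>. a (G \<omega>) * Y \<omega>) \<omega> = a (G \<omega>) * real_cond_exp M H Y \<omega>"
    using aH YM by (intro H.real_cond_exp_mult)
  moreover have "AE \<omega> in M. real_cond_exp M H Y \<omega> = real_cond_exp M (sigma_of M N Z) Y \<omega>"
    unfolding H_def using A G indep Z Y by (rule real_cond_exp_Pair_indep)
  ultimately show ?thesis
    unfolding H_def by eventually_elim simp
qed

section \<open>Random linear isometries independent of the data\<close>

locale indep_random_isometry = prob_space +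
  fixes A :: "'a measure" and L :: "'g measure" and G :: "'a \<Rightarrow> 'g"
    and \<rho> :: "'g \<Rightarrow> real^'n \<Rightarrow> real^'m"
  assumes subalg: "subalgebra M A"
    and measurable_G: "G \<in> measurable M L"
    and indep: "indep_set (sets A) (sets (sigma_of M L G))"
    and linear_\<rho>: "\<And>g. linear (\<rho> g)"
    and norm_\<rho>: "\<And>g x. norm (\<rho> g x) = norm x"
    and measurable_\<rho>: "\<And>v. (\<lambda>g. \<rho> g v) \<in> borel_measurable L"
begin

text \<open>Componentwise, \<open>\<rho> (G \<omega>)\<close> is a matrix with \<open>\<sigma>(Z, G)\<close>-measurable entries bounded by \<open>1\<close>.\<close>

lemma cond_exp_vec_isometry:
  assumes Z: "Z \<in> measurable A N" and D: "D \<in> borel_measurable A" "square_integrable M D"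
  shows "AE \<omega> in M. cond_exp_vec M (sigma_of M (N \<Otimes>\<^sub>M L) (\<lambda>\<omega>. (Z \<omega>, G \<omega>))) (\<lambda>\<omega>. \<rho> (G \<omega>) (D \<omega>)) \<omega>
    = \<rho> (G \<omega>) (cond_exp_vec M (sigma_of M N Z) D \<omega>)"
proof -
  define H where "H = sigma_of M (N \<Otimes>\<^sub>M L) (\<lambda>\<omega>. (Z \<omega>, G \<omega>))"
  define K where "K = sigma_of M N Z"
  define a where "a i j g = \<rho> g (axis i 1) $ j" for i j g
  have ZM: "Z \<in> measurable M N"
    using subalg Z by (rule measurable_from_subalg)
  interpret H: sigma_finite_subalgebra M H
    unfolding H_def using ZM measurable_G
    by (intro subalgebra_imp_sigma_finite_subalgebra subalgebra_sigma_of_Pair)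
  have expansion: "\<rho> g v $ j = (\<Sum>i\<in>UNIV. a i j g * v $ i)" for g v j
    unfolding a_def by (subst linear_vec_nth_expansion[OF linear_\<rho>]) (simp add: mult.commute)
  have a: "a i j \<in> borel_measurable L" "\<bar>a i j g\<bar> \<le> 1" for i j g
    unfolding a_def using borel_measurable_vec_nth[OF measurable_\<rho>]
      component_le_norm_cart[of "\<rho> g (axis i 1)" j] by (simp_all add: norm_\<rho>)
  have Di: "(\<lambda>\<omega>. D \<omega> $ i) \<in> borel_measurable A" "integrable M (\<lambda>\<omega>. D \<omega> $ i)" for i
    using D by (auto simp: square_integrable_vec_iff intro: square_integrable_integrable)
  have "AE \<omega> in M. \<forall>j\<in>UNIV. real_cond_exp M H (\<lambda>\<omega>. \<rho> (G \<omega>) (D \<omega>) $ j) \<omega>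
      = \<rho> (G \<omega>) (cond_exp_vec M K D \<omega>) $ j"
  proof (rule AE_finite_allI)
    fix j
    have "integrable M (\<lambda>\<omega>. a i j (G \<omega>) * D \<omega> $ i)" for i
      using Di(2) measurable_compose[OF measurable_G a(1)] a(2) by (rule integrable_mult_bounded)
    then have "AE \<omega> in M. real_cond_exp M H (\<lambda>\<omega>. \<Sum>i\<in>UNIV. a i j (G \<omega>) * D \<omega> $ i) \<omega>
        = (\<Sum>i\<in>UNIV. real_cond_exp M H (\<lambda>\<omega>. a i j (G \<omega>) * D \<omega> $ i) \<omega>)"
      by (rule H.real_cond_exp_sum)
    moreover have "AE \<omega> in M. \<forall>i\<in>UNIV. real_cond_exp M H (\<lambda>\<omega>. a i j (G \<omega>) * D \<omega> $ i) \<omega>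
        = a i j (G \<omega>) * real_cond_exp M K (\<lambda>\<omega>. D \<omega> $ i) \<omega>"
      unfolding H_def K_def using Di a
      by (intro AE_finite_allI real_cond_exp_Pair_indep_mult[OF subalg measurable_G indep Z]) auto
    ultimately show "AE \<omega> in M. real_cond_exp M H (\<lambda>\<omega>. \<rho> (G \<omega>) (D \<omega>) $ j) \<omega>
        = \<rho> (G \<omega>) (cond_exp_vec M K D \<omega>) $ j"
      unfolding expansion by eventually_elim (simp add: cond_exp_vec_def)
  qed simp
  then show ?thesis
    unfolding H_def[symmetric] K_def[symmetric] by eventually_elim (simp add: vec_eq_iff cond_exp_vec_def)
qed

lemma cond_var_isometry:
  assumes Z: "Z \<in> measurable A N" and D: "D \<in> borel_measurable A" "square_integrable M D"
  shows "AE \<omega> in M. cond_var M (sigma_of M (N \<Otimes>\<^sub>M L) (\<lambda>\<omega>. (Z \<omega>, G \<omega>))) (\<lambda>\<omega>. \<rho> (G \<omega>) (D \<omega>)) \<omega>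
    = cond_var M (sigma_of M N Z) D \<omega>"
proof -
  define H where "H = sigma_of M (N \<Otimes>\<^sub>M L) (\<lambda>\<omega>. (Z \<omega>, G \<omega>))"
  define K where "K = sigma_of M N Z"
  define m where "m = cond_exp_vec M K D"
  have ZM: "Z \<in> measurable M N"
    using subalg Z by (rule measurable_from_subalg)
  have DM: "D \<in> borel_measurable M"
    using subalg D(1) by (rule measurable_from_subalg)
  interpret H: sigma_finite_subalgebra M H
    unfolding H_def using ZM measurable_G
    by (intro subalgebra_imp_sigma_finite_subalgebra subalgebra_sigma_of_Pair)
  have subK: "subalgebra M K"
    unfolding K_def using ZM by (rule subalgebra_sigma_of) simp
  have subAK: "subalgebra A K"
    unfolding K_def using Z by (rule subalgebra_sigma_of) (use subalg in \<open>simp add: subalgebra_def\<close>)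
  have mA: "m \<in> borel_measurable A"
    unfolding m_def using subAK by (rule measurable_from_subalg) simp
  have residual: "square_integrable M (\<lambda>\<omega>. D \<omega> - m \<omega>)"
    unfolding m_def using D(2) subK by (intro square_integrable_vec_diff square_integrable_cond_exp_vec)
  have "AE \<omega> in M. cond_var M H (\<lambda>\<omega>. \<rho> (G \<omega>) (D \<omega>)) \<omega>
      = real_cond_exp M H (\<lambda>\<omega>. (norm (D \<omega> - m \<omega>))\<^sup>2) \<omega>"
    unfolding cond_var_def
  proof (rule H.real_cond_exp_cong)
    show "AE \<omega> in M. (norm (\<rho> (G \<omega>) (D \<omega>) - cond_exp_vec M H (\<lambda>\<omega>. \<rho> (G \<omega>) (D \<omega>)) \<omega>))\<^sup>2
        = (norm (D \<omega> - m \<omega>))\<^sup>2"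
      using cond_exp_vec_isometry[OF Z D] unfolding H_def[symmetric] K_def[symmetric] m_def[symmetric]
      by eventually_elim (simp add: linear_diff[OF linear_\<rho>, symmetric] norm_\<rho>)
    show "(\<lambda>\<omega>. (norm (\<rho> (G \<omega>) (D \<omega>) - cond_exp_vec M H (\<lambda>\<omega>. \<rho> (G \<omega>) (D \<omega>)) \<omega>))\<^sup>2)
        \<in> borel_measurable M"
      using borel_measurable_linear_family[OF linear_\<rho> measurable_\<rho> DM measurable_G] by measurable
    show "(\<lambda>\<omega>. (norm (D \<omega> - m \<omega>))\<^sup>2) \<in> borel_measurable M"
      using DM unfolding m_def by measurable
  qed
  moreover have "AE \<omega> in M. real_cond_exp M H (\<lambda>\<omega>. (norm (D \<omega> - m \<omega>))\<^sup>2) \<omega>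
      = real_cond_exp M K (\<lambda>\<omega>. (norm (D \<omega> - m \<omega>))\<^sup>2) \<omega>"
    unfolding H_def K_def using D(1) mA residual
    by (intro real_cond_exp_Pair_indep[OF subalg measurable_G indep Z]) (auto simp: square_integrable_def)
  ultimately show ?thesis
    unfolding H_def[symmetric] K_def[symmetric] by eventually_elim (simp add: cond_var_def m_def)
qed

lemma sigma_of_Pair_isometry:
  fixes \<rho>' :: "'g \<Rightarrow> real^'m \<Rightarrow> real^'n" and X :: "'a \<Rightarrow> real^'n"
  assumes inverse: "\<And>g x. \<rho>' g (\<rho> g x) = x"
    and linear_\<rho>': "\<And>g. linear (\<rho>' g)" and measurable_\<rho>': "\<And>v. (\<lambda>g. \<rho>' g v) \<in> borel_measurable L"
  shows "sigma_of M (borel \<Otimes>\<^sub>M L) (\<lambda>\<omega>. (\<rho> (G \<omega>) (X \<omega>), G \<omega>))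
    = sigma_of M (borel \<Otimes>\<^sub>M L) (\<lambda>\<omega>. (X \<omega>, G \<omega>))"
proof (rule sigma_of_eqI)
  show "(\<lambda>p. (\<rho> (snd p) (fst p), snd p)) \<in> measurable (borel \<Otimes>\<^sub>M L) (borel \<Otimes>\<^sub>M L)"
    using borel_measurable_linear_family[OF linear_\<rho> measurable_\<rho> measurable_fst measurable_snd] by measurable
  show "(\<lambda>p. (\<rho>' (snd p) (fst p), snd p)) \<in> measurable (borel \<Otimes>\<^sub>M L) (borel \<Otimes>\<^sub>M L)"
    using borel_measurable_linear_family[OF linear_\<rho>' measurable_\<rho>' measurable_fst measurable_snd] by measurable
qed (use measurable_G in \<open>auto simp: inverse space_pair_measure dest: measurable_space\<close>)

theorem cond_var_decomposition:
  fixes \<rho>' :: "'g \<Rightarrow> real^'m \<Rightarrow> real^'n" and X D :: "'a \<Rightarrow> real^'n"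
  assumes inverse: "\<And>g x. \<rho>' g (\<rho> g x) = x"
    and linear_\<rho>': "\<And>g. linear (\<rho>' g)" and measurable_\<rho>': "\<And>v. (\<lambda>g. \<rho>' g v) \<in> borel_measurable L"
    and X: "X \<in> borel_measurable A" and D: "D \<in> borel_measurable A" "square_integrable M D"
  defines "Z \<equiv> \<lambda>\<omega>. \<rho> (G \<omega>) (X \<omega>)" and "U \<equiv> \<lambda>\<omega>. \<rho> (G \<omega>) (D \<omega>)"
  shows "AE \<omega> in M. cond_var M (sigma_of M borel Z) U \<omega>
      = real_cond_exp M (sigma_of M borel Z) (cond_var M (sigma_of M borel X) D) \<omega>
        + cond_var M (sigma_of M borel Z) (cond_exp_vec M (sigma_of M (borel \<Otimes>\<^sub>M L) (\<lambda>\<omega>. (Z \<omega>, G \<omega>))) U) \<omega>"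
    and "AE \<omega> in M. 0 \<le> cond_var M (sigma_of M borel Z)
      (cond_exp_vec M (sigma_of M (borel \<Otimes>\<^sub>M L) (\<lambda>\<omega>. (Z \<omega>, G \<omega>))) U) \<omega>"
    and "expectation (cond_var M (sigma_of M borel X) D) \<le> expectation (cond_var M (sigma_of M borel Z) U)"
proof -
  define F where "F = sigma_of M borel Z"
  define H where "H = sigma_of M (borel \<Otimes>\<^sub>M L) (\<lambda>\<omega>. (Z \<omega>, G \<omega>))"
  define K where "K = sigma_of M borel X"
  define W where "W = cond_exp_vec M H U"
  have XM: "X \<in> borel_measurable M" and DM: "D \<in> borel_measurable M"
    using subalg X D(1) by (auto intro: measurable_from_subalg)
  have ZM: "Z \<in> borel_measurable M" and UM: "U \<in> borel_measurable M"
    unfolding Z_def U_def using XM DM measurable_G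
    by (auto intro: borel_measurable_linear_family[OF linear_\<rho> measurable_\<rho>])
  have subH: "subalgebra M H" and subHF: "subalgebra H F"
    unfolding H_def F_def using ZM measurable_G by (rule subalgebra_sigma_of_Pair subalgebra_sigma_of_Pair_fst)+
  have subF: "subalgebra M F"
    using subH subHF by (auto simp: subalgebra_def)
  have subK: "subalgebra M K"
    unfolding K_def using XM by (rule subalgebra_sigma_of) simp
  have U: "square_integrable M U"
    using D(2) UM by (simp add: U_def square_integrable_def norm_\<rho>)
  have W: "square_integrable M W"
    unfolding W_def using subH U by (rule square_integrable_cond_exp_vec)
  interpret F: sigma_finite_subalgebra M F
    using subF by (rule subalgebra_imp_sigma_finite_subalgebra)
  have "AE \<omega> in M. real_cond_exp M F (cond_var M H U) \<omega> = real_cond_exp M F (cond_var M K D) \<omega>"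
    using cond_var_isometry[OF X D]
    unfolding H_def Z_def sigma_of_Pair_isometry[OF inverse linear_\<rho>' measurable_\<rho>'] K_def U_def
    by (intro F.real_cond_exp_cong) (auto simp: cond_var_def)
  then show decomposition: "AE \<omega> in M. cond_var M F U \<omega>
      = real_cond_exp M F (cond_var M K D) \<omega> + cond_var M F W \<omega>"
    using cond_var_total[OF subH subHF U] unfolding W_def by eventually_elim simp
  show nonneg: "AE \<omega> in M. 0 \<le> cond_var M F W \<omega>"
    using W by (intro cond_var_nonneg[OF subF]) (simp add: square_integrable_def)
  show "expectation (cond_var M K D) \<le> expectation (cond_var M F U)"
    using subF integrable_cond_var[OF subK D(2)] integrable_cond_var[OF subF W] nonneg _ decomposition
    by (rule expectation_le_cond_exp_add_nonneg) (simp add: cond_var_def)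
qed

end

section \<open>Compact groups acting orthogonally\<close>

lemma group_action_inverse:
  assumes "group Gr" "carrier Gr = UNIV"
    and "\<And>g h. \<rho> (g \<otimes>\<^bsub>Gr\<^esub> h) = \<rho> g \<circ> \<rho> h" "\<rho> \<one>\<^bsub>Gr\<^esub> = id"
  shows "\<rho> (inv\<^bsub>Gr\<^esub> g) (\<rho> g x) = x"
  using group.l_inv[OF assms(1)] assms(2-4) by (metis UNIV_I comp_apply id_apply)

lemma borel_measurable_continuous_action:
  fixes \<rho> :: "'g::topological_space \<Rightarrow> 'b::topological_space \<Rightarrow> 'c::topological_space"
  assumes "continuous_on UNIV (\<lambda>p. \<rho> (fst p) (snd p))" "continuous_on UNIV h" "sets L = sets borel"
  shows "(\<lambda>g. \<rho> (h g) v) \<in> borel_measurable L"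
proof -
  have "continuous_on UNIV (\<lambda>g. \<rho> (h g) v)"
    using continuous_on_compose2[OF assms(1) continuous_on_Pair[OF assms(2) continuous_on_const]] by simp
  then show ?thesis
    by (subst measurable_cong_sets[OF assms(3) refl]) (rule borel_measurable_continuous_onI)
qed

lemma indep_random_isometry_continuous_action:
  fixes \<rho> :: "'g::topological_space \<Rightarrow> real^'n \<Rightarrow> real^'m"
  assumes M: "prob_space M" and Y: "Y \<in> borel_measurable M" and G: "G \<in> measurable M L"
    and indep: "prob_space.indep_set M {G -` A \<inter> space M | A. A \<in> sets L} {Y -` B \<inter> space M | B. B \<in> sets borel}"
    and \<rho>: "\<And>g. linear (\<rho> g)" "\<And>g x. norm (\<rho> g x) = norm x"
      "continuous_on UNIV (\<lambda>p. \<rho> (fst p) (snd p))"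
    and L: "sets L = sets borel"
  shows "indep_random_isometry M (sigma_of M borel Y) L G \<rho>"
proof -
  interpret prob_space M
    by (fact M)
  show ?thesis
  proof
    show "subalgebra M (sigma_of M borel Y)"
      using Y by (rule subalgebra_sigma_of) simp
    show "indep_set (sets (sigma_of M borel Y)) (sets (sigma_of M L G))"
      using indep Y G unfolding sigma_of_def
      by (subst (1 2) sets_vimage_algebra2) (auto simp: indep_set_commute dest: measurable_space)
    show "(\<lambda>g. \<rho> g v) \<in> borel_measurable L" for v
      using borel_measurable_continuous_action[OF \<rho>(3) continuous_on_id L] by simp
  qed (use \<rho> G in \<open>auto simp: linear_add linear_scale\<close>)
qed

theorem theorem3p5:
  fixes M :: "'a measure"
    and Gr :: "'g::t2_space monoid"
    and lam :: "'g measure"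
    and \<rho> :: "'g \<Rightarrow> real^'d \<Rightarrow> real^'d"
    and G :: "'a \<Rightarrow> 'g"
    and Zt0 Zt1 Z0 Z1 Zt Ztt D U :: "'a \<Rightarrow> real^'d"
    and t :: real
  assumes "prob_space M"
    \<comment> \<open>compact (Hausdorff) topological group\<close>
    and "group Gr" and "carrier Gr = UNIV"
    and "compact (UNIV :: 'g set)"
    and "continuous_on UNIV (\<lambda>p::'g \<times> 'g. fst p \<otimes>\<^bsub>Gr\<^esub> snd p)"
    and "continuous_on UNIV (\<lambda>g. inv\<^bsub>Gr\<^esub> g)"
    \<comment> \<open>linear orthogonal (continuous) action on R^d\<close>
    and "\<And>g. linear (\<rho> g)"
    and "\<And>g x. norm (\<rho> g x) = norm x"
    and "\<And>g h. \<rho> (g \<otimes>\<^bsub>Gr\<^esub> h) = \<rho> g \<circ> \<rho> h"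
    and "\<rho> \<one>\<^bsub>Gr\<^esub> = id"
    and "continuous_on UNIV (\<lambda>p::'g \<times> (real^'d). \<rho> (fst p) (snd p))"
    \<comment> \<open>normalized Haar measure\<close>
    and "prob_space lam" and "sets lam = sets borel"
    and "\<And>g. distr lam lam (\<lambda>h. g \<otimes>\<^bsub>Gr\<^esub> h) = lam"
    \<comment> \<open>random vectors with finite second moments\<close>
    and "Zt0 \<in> borel_measurable M" and "Zt1 \<in> borel_measurable M"
    and "integrable M (\<lambda>\<omega>. (norm (Zt0 \<omega>))^2)"
    and "integrable M (\<lambda>\<omega>. (norm (Zt1 \<omega>))^2)"
    \<comment> \<open>G ~ lam, independent of the pair\<close>
    and "G \<in> measurable M lam" and "distr M lam G = lam"
    and "prob_space.indep_set M
           {G -` A \<inter> space M | A. A \<in> sets lam}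
           {(\<lambda>\<omega>. (Zt0 \<omega>, Zt1 \<omega>)) -` B \<inter> space M | B. B \<in> sets (borel :: ((real^'d) \<times> (real^'d)) measure)}"
    and "t \<in> {0..1}"
    and "Z0 = (\<lambda>\<omega>. \<rho> (G \<omega>) (Zt0 \<omega>))"
    and "Z1 = (\<lambda>\<omega>. \<rho> (G \<omega>) (Zt1 \<omega>))"
    and "Zt = (\<lambda>\<omega>. (1 - t) *\<^sub>R Z0 \<omega> + t *\<^sub>R Z1 \<omega>)"
    and "Ztt = (\<lambda>\<omega>. (1 - t) *\<^sub>R Zt0 \<omega> + t *\<^sub>R Zt1 \<omega>)"
    and "D = (\<lambda>\<omega>. Zt1 \<omega> - Zt0 \<omega>)"
    and "U = (\<lambda>\<omega>. Z1 \<omega> - Z0 \<omega>)"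
  shows "(AE \<omega> in M.
            cond_var M (sigma_of M borel Zt) U \<omega>
          = real_cond_exp M (sigma_of M borel Zt) (cond_var M (sigma_of M borel Ztt) D) \<omega>
            + cond_var M (sigma_of M borel Zt)
                (cond_exp_vec M (sigma_of M (borel \<Otimes>\<^sub>M lam) (\<lambda>\<omega>. (Zt \<omega>, G \<omega>))) U) \<omega>)
       \<and> (AE \<omega> in M. cond_var M (sigma_of M borel Zt)
                (cond_exp_vec M (sigma_of M (borel \<Otimes>\<^sub>M lam) (\<lambda>\<omega>. (Zt \<omega>, G \<omega>))) U) \<omega> \<ge> 0)
       \<and> prob_space.expectation M (cond_var M (sigma_of M borel Zt) U)
           \<ge> prob_space.expectation M (cond_var M (sigma_of M borel Ztt) D)"
proof -
  interpret prob_space M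
    by fact
  define A where "A = sigma_of M borel (\<lambda>\<omega>. (Zt0 \<omega>, Zt1 \<omega>))"
  have pair: "(\<lambda>\<omega>. (Zt0 \<omega>, Zt1 \<omega>)) \<in> borel_measurable M"
    using assms(15,16) by measurable
  interpret indep_random_isometry M A lam G \<rho>
    unfolding A_def using assms(1) pair assms(19,21,7,8,11,13) by (rule indep_random_isometry_continuous_action)
  have "(\<lambda>p. (1 - t) *\<^sub>R fst p + t *\<^sub>R snd p) \<in> borel_measurable (borel :: ((real^'d) \<times> (real^'d)) measure)"
    and "(\<lambda>p. snd p - fst p) \<in> borel_measurable (borel :: ((real^'d) \<times> (real^'d)) measure)"
    by (intro borel_measurable_continuous_onI continuous_intros)+
  from this[THEN measurable_compose[OF measurable_sigma_of[OF pair]]]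
  have measurable: "Ztt \<in> borel_measurable A" "D \<in> borel_measurable A"
    unfolding A_def assms(26,27) by simp_all
  have "square_integrable M D"
    using assms(15-18) unfolding assms(27) by (intro square_integrable_vec_diff) (simp_all add: square_integrable_def)
  note decomposition = cond_var_decomposition[OF group_action_inverse[OF assms(2,3,9,10)] assms(7)
      borel_measurable_continuous_action[OF assms(11,6,13)] measurable this]
  have "Zt = (\<lambda>\<omega>. \<rho> (G \<omega>) (Ztt \<omega>))" "U = (\<lambda>\<omega>. \<rho> (G \<omega>) (D \<omega>))"
    unfolding assms(23-28) by (simp_all add: linear_add linear_scale linear_diff assms(7))
  then show ?thesis
    using decomposition by (simp add: A_def)
qed

end
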